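(* Let $Q:(-\infty,-1)\to(-\infty,0)$ be the inverse of the strictly increasing function $G\mapsto G-e^G$ on $(-\infty,0)$, and define $R:\mathbb{R}\to\mathbb{R}$ by $R(V)=-2(1-e^{Q(V)})^2$ for $V<-1$ and $R(V)=4(V+1)$ for $V\ge -1$. Fix $m<-1$. For $n\in\mathbb{R}$ let $V(t;n)$ denote the unique solution of $V''+3V'=R(V)$, $t>0$, $V(0)=m$, $V'(0)=n$ (prime denoting $d/dt$, $V_t=dV/dt$). Define $\beta^0=\{n\in\mathbb{R}: V_t(t;n)>0 \text{ and } V(t;n)\le -1 \text{ for all } t>0\}$. Then $\beta^0$ is a nonempty closed set. Moreover, if $n\in\beta^0$, then $V(t;n)<-1$ for all $t>0$. *)

theory Defs
  imports "HOL-Analysis.Analysis"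
begin

definition Qinv :: "real \<Rightarrow> real" where
  "Qinv v = (THE g. g < 0 \<and> g - exp g = v)"

definition Rfun :: "real \<Rightarrow> real" where
  "Rfun v = (if v < -1 then -2 * (1 - exp (Qinv v))^2 else 4 * (v + 1))"

end

theory Submission
  imports Defs
begin

text \<open>Apart from \<open>\<beta>\<^sup>0\<close>, every slope \<open>n\<close> either overshoots (some time
  with \<open>V > -1\<close> and \<open>V\<^sub>t > 0\<close>, after which \<open>V > -1\<close> forever) or turns back (some time with
  \<open>V < -1\<close> and \<open>V\<^sub>t < 0\<close>, after which \<open>V < -1\<close> forever); the only other conceivable case, a
  rest point at \<open>-1\<close>, is excluded by an energy estimate run back to \<open>V(0) = m < -1\<close>.
  Since \<open>R\<close> is nondecreasing and \<open>4\<close>-Lipschitz, a Gronwall estimate gives continuous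
  dependence on \<open>n\<close>, so both alternatives are open sets; they are disjoint by the invariance
  and nonempty (large \<open>n\<close> overshoots, negative \<open>n\<close> turns back). Connectedness of \<open>\<real>\<close>
  makes \<open>\<beta>\<^sup>0\<close> nonempty, and it is closed as the complement of their union. On \<open>\<beta>\<^sup>0\<close>
  the trajectory increases strictly, so it stays strictly below its bound \<open>-1\<close>.\<close>

section \<open>The nonlinearity\<close>

lemma minus_exp_strict_mono_nonpos:
  fixes g1 g2 :: real
  assumes "g1 < g2" "g2 \<le> 0"
  shows "g1 - exp g1 < g2 - exp g2"
proof (rule DERIV_pos_imp_increasing_open[OF assms(1)])
  fix x assume "g1 < x" "x < g2"
  then show "\<exists>y. ((\<lambda>g. g - exp g) has_real_derivative y) (at x) \<and> 0 < y"
    using assms(2) by (intro exI[of _ "1 - exp x"]) (auto intro!: derivative_eq_intros)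
qed (intro continuous_intros)

lemma Qinv:
  fixes v :: real
  assumes "v < -1"
  shows "Qinv v < 0" "Qinv v - exp (Qinv v) = v"
proof -
  obtain g where g: "v \<le> g" "g \<le> 0" "g - exp g = v"
  proof -
    have "\<exists>g\<ge>v. g \<le> 0 \<and> g - exp g = v"
      using assms by (intro IVT') (auto intro!: continuous_intros)
    then show ?thesis using that by blast
  qed
  have "g \<noteq> 0" using g assms by auto
  have "\<exists>!g. g < 0 \<and> g - exp g = v"
  proof (rule ex1I)
    show "g < 0 \<and> g - exp g = v" using g \<open>g \<noteq> 0\<close> by auto
  next
    fix h assume "h < 0 \<and> h - exp h = v"
    with g \<open>g \<noteq> 0\<close> show "h = g"
      using minus_exp_strict_mono_nonpos[of h g] minus_exp_strict_mono_nonpos[of g h]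
      by (cases h g rule: linorder_cases) auto
  qed
  then have "Qinv v < 0 \<and> Qinv v - exp (Qinv v) = v"
    unfolding Qinv_def by (rule theI')
  then show "Qinv v < 0" "Qinv v - exp (Qinv v) = v" by auto
qed

lemma Qinv_mono:
  assumes "v1 \<le> v2" "v2 < -1"
  shows "Qinv v1 \<le> Qinv v2"
  using Qinv[of v1] Qinv[of v2] assms minus_exp_strict_mono_nonpos[of "Qinv v2" "Qinv v1"]
  by force

lemma Rfun_neg: "v < -1 \<Longrightarrow> Rfun v < 0"
  using Qinv[of v] by (simp add: Rfun_def)

lemma Rfun_pos: "v > -1 \<Longrightarrow> Rfun v > 0"
  by (simp add: Rfun_def)

lemma Rfun_ge_minus_2: "Rfun v \<ge> -2"
proof (cases "v < -1")
  case True
  have "exp (Qinv v) < 1" using Qinv(1)[OF True] by simp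
  then have "(1 - exp (Qinv v))^2 \<le> 1"
    by (simp add: power_le_one)
  then show ?thesis using True by (simp add: Rfun_def)
qed (simp add: Rfun_def)

lemma mono_Rfun: "mono Rfun"
proof (rule monoI)
  fix x y :: real assume "x \<le> y"
  consider "y < -1" | "x < -1" "-1 \<le> y" | "-1 \<le> x"
    using \<open>x \<le> y\<close> by linarith
  then show "Rfun x \<le> Rfun y"
  proof cases
    case 1
    then have "exp (Qinv x) \<le> exp (Qinv y)" "exp (Qinv y) < 1"
      using Qinv_mono[OF \<open>x \<le> y\<close>] Qinv(1)[of y] by auto
    then have "(1 - exp (Qinv y))^2 \<le> (1 - exp (Qinv x))^2"
      by (intro power_mono) auto
    then show ?thesis using 1 \<open>x \<le> y\<close> by (simp add: Rfun_def)
  next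
    case 2
    then show ?thesis using Rfun_neg[of x] by (simp add: Rfun_def[of y])
  qed (use \<open>x \<le> y\<close> in \<open>simp add: Rfun_def\<close>)
qed

text \<open>Along \<open>v = g - exp g\<close> one has \<open>4 v - Rfun v = 4 (g - exp g) + 2 (1 - exp g)\<^sup>2\<close>,
  whose derivative in \<open>g\<close> is \<open>4 (1 - exp g)\<^sup>2 \<ge> 0\<close>; for \<open>v \<ge> -1\<close> it is the value \<open>-4\<close> at \<open>g = 0\<close>.\<close>
lemma mono_4_times_minus_Rfun: "mono (\<lambda>v. 4 * v - Rfun v)"
proof -
  define \<psi> :: "real \<Rightarrow> real" where "\<psi> g = 4 * (g - exp g) + 2 * (1 - exp g)^2" for g
  have mono_\<psi>: "\<psi> a \<le> \<psi> b" if "a \<le> b" for a b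
  proof (rule DERIV_nonneg_imp_nondecreasing[OF that])
    fix x
    have "(\<psi> has_real_derivative 4 * (1 - exp x)^2) (at x)"
      unfolding \<psi>_def
      by (rule derivative_eq_intros refl | simp)+ (simp add: power2_eq_square algebra_simps)
    then show "\<exists>y. (\<psi> has_real_derivative y) (at x) \<and> 0 \<le> y" by auto
  qed
  have eq: "4 * v - Rfun v = \<psi> (if v < -1 then Qinv v else 0)" for v
    using Qinv[of v] by (auto simp: Rfun_def \<psi>_def)
  show ?thesis
  proof (rule monoI)
    fix x y :: real assume "x \<le> y"
    then have "(if x < -1 then Qinv x else 0) \<le> (if y < -1 then Qinv y else 0)"
      using Qinv(1)[of x] Qinv_mono[of x y] by auto
    then show "4 * x - Rfun x \<le> 4 * y - Rfun y"
      unfolding eq by (rule mono_\<psi>)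
  qed
qed

lemma Rfun_lipschitz: "\<bar>Rfun x - Rfun y\<bar> \<le> 4 * \<bar>x - y\<bar>"
  using monoD[OF mono_Rfun, of x y] monoD[OF mono_Rfun, of y x]
    monoD[OF mono_4_times_minus_Rfun, of x y] monoD[OF mono_4_times_minus_Rfun, of y x]
  by (cases "x \<le> y") auto

lemma Rfun_bound: "\<bar>Rfun x\<bar> \<le> 4 * \<bar>x + 1\<bar>"
  using Rfun_lipschitz[of x "-1"] by (simp add: Rfun_def)

text \<open>\<open>2 a b + 2 b (r - 3 b)\<close> is the rate of change of \<open>a\<^sup>2 + b\<^sup>2\<close> along \<open>a' = b\<close>,
  \<open>b' = r - 3 b\<close>.\<close>
lemma energy_rate_bounds:
  fixes a b r :: real
  assumes "\<bar>r\<bar> \<le> 4 * \<bar>a\<bar>"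
  shows "-11 * (a^2 + b^2) \<le> 2 * a * b + 2 * b * (r - 3 * b)"
    and "2 * a * b + 2 * b * (r - 3 * b) \<le> 5 * (a^2 + b^2)"
proof -
  have ab: "2 * \<bar>a\<bar> * \<bar>b\<bar> \<le> a^2 + b^2"
    using sum_squares_ge_zero[of "\<bar>a\<bar> - \<bar>b\<bar>" 0] by (simp add: power2_eq_square algebra_simps)
  have ab2: "\<bar>2 * a * b\<bar> \<le> a^2 + b^2"
    using ab by (simp add: abs_mult)
  have br: "\<bar>2 * b * r\<bar> \<le> 4 * (a^2 + b^2)"
  proof -
    have "\<bar>b\<bar> * \<bar>r\<bar> \<le> \<bar>b\<bar> * (4 * \<bar>a\<bar>)"
      using assms by (intro mult_left_mono) auto
    then have "\<bar>2 * b * r\<bar> \<le> 2 * \<bar>b\<bar> * (4 * \<bar>a\<bar>)"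
      by (simp add: abs_mult mult_ac)
    also have "\<dots> \<le> 4 * (a^2 + b^2)" using ab by (simp add: mult_ac)
    finally show ?thesis .
  qed
  have eq: "2 * a * b + 2 * b * (r - 3 * b) = 2 * a * b + 2 * b * r - 6 * b^2"
    by (simp add: algebra_simps power2_eq_square)
  show "-11 * (a^2 + b^2) \<le> 2 * a * b + 2 * b * (r - 3 * b)"
    using ab2 br eq zero_le_power2[of a] zero_le_power2[of b] by (smt (verit))
  show "2 * a * b + 2 * b * (r - 3 * b) \<le> 5 * (a^2 + b^2)"
    using ab2 br eq zero_le_power2[of a] zero_le_power2[of b] by (smt (verit))
qed

lemma first_root:
  fixes w :: "real \<Rightarrow> real"
  assumes cont: "continuous_on {a..b} w" and "w a < 0" and "s \<in> {a..b}" "w s \<ge> 0"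
  obtains T where "a < T" "T \<le> b" "w T = 0" "\<forall>x\<in>{a..<T}. w x < 0"
proof -
  define S where "S = {a..b} \<inter> w -` {0}"
  have "compact S"
    unfolding S_def compact_eq_bounded_closed
    by (auto intro: continuous_closed_preimage[OF cont] bounded_subset[of "{a..b}"])
  have root_before: "\<exists>z\<in>S. z \<le> x" if "x \<in> {a..b}" "w x \<ge> 0" for x
  proof -
    have "\<exists>z\<ge>a. z \<le> x \<and> w z = 0"
      using that \<open>w a < 0\<close> by (intro IVT') (auto intro: continuous_on_subset[OF cont])
    then show ?thesis unfolding S_def using that by auto
  qed
  obtain T where T: "T \<in> S" "\<forall>x\<in>S. T \<le> x"
    using compact_attains_inf[OF \<open>compact S\<close>] root_before[OF assms(3,4)] by auto
  have "\<forall>x\<in>{a..<T}. w x < 0"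
  proof
    fix x assume x: "x \<in> {a..<T}"
    show "w x < 0"
    proof (rule ccontr)
      assume "\<not> w x < 0"
      then obtain z where "z \<in> S" "z \<le> x"
        using root_before[of x] x T(1) unfolding S_def by force
      then show False using T(2) x by force
    qed
  qed
  moreover have "a \<noteq> T" using T \<open>w a < 0\<close> unfolding S_def by auto
  ultimately show ?thesis using T unfolding S_def by (intro that) auto
qed

lemma negative_persists:
  fixes f :: "real \<Rightarrow> real"
  assumes cont: "continuous_on {a..b} f" and "f a < 0"
    and decreasing_at_root: "\<And>T. a < T \<Longrightarrow> T \<le> b \<Longrightarrow> f T = 0 \<Longrightarrow> \<forall>x\<in>{a..T}. f x \<le> 0 \<Longrightarrow>
           \<exists>D<0. (f has_real_derivative D) (at T)"
  shows "\<forall>x\<in>{a..b}. f x < 0"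
proof (rule ccontr)
  assume "\<not> ?thesis"
  then obtain s where "s \<in> {a..b}" "f s \<ge> 0" by force
  then obtain T where T: "a < T" "T \<le> b" "f T = 0" "\<forall>x\<in>{a..<T}. f x < 0"
    using first_root[OF cont \<open>f a < 0\<close>] by blast
  have "\<forall>x\<in>{a..T}. f x \<le> 0"
  proof
    fix x assume x: "x \<in> {a..T}"
    show "f x \<le> 0"
    proof (cases "x = T")
      case False
      then have "x \<in> {a..<T}" using x by auto
      then show ?thesis using T by fastforce
    qed (use T in simp)
  qed
  then obtain D where "D < 0" "(f has_real_derivative D) (at T)"
    using decreasing_at_root T by blast
  then obtain d where "d > 0" and d: "\<forall>h>0. h < d \<longrightarrow> f T < f (T - h)"
    using DERIV_neg_dec_left by blast
  obtain h where "0 < h" "h < d" "h < T - a"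
    using field_lbound_gt_zero[of d "T - a"] \<open>d > 0\<close> T(1) by auto
  then have "f (T - h) < 0" using T(4) by auto
  moreover have "f T < f (T - h)" using d \<open>0 < h\<close> \<open>h < d\<close> by blast
  ultimately show False using T(3) by simp
qed

section \<open>A single trajectory\<close>

locale trajectory =
  fixes v w :: "real \<Rightarrow> real" and m n :: real
  assumes m_less: "m < -1"
    and v_deriv_within: "\<And>t. t \<ge> 0 \<Longrightarrow> (v has_real_derivative w t) (at t within {0..})"
    and w_deriv: "\<And>t. t > 0 \<Longrightarrow> (w has_real_derivative Rfun (v t) - 3 * w t) (at t)"
    and v_0: "v 0 = m"
    and w_0: "w 0 = n"
begin

lemma v_deriv:
  assumes "t > 0"
  shows "(v has_real_derivative w t) (at t)"
proof -
  have "at t within {0..} = at t"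
    by (rule at_within_nhd[of t "{0<..}"]) (use assms in auto)
  then show ?thesis using v_deriv_within[of t] assms by simp
qed

lemma continuous_on_v: "continuous_on {0..} v"
  using v_deriv_within
  by (auto simp: continuous_on_eq_continuous_within intro: DERIV_continuous)

lemma continuous_on_w: "0 < a \<Longrightarrow> continuous_on {a..b} w"
  using DERIV_isCont[OF w_deriv] by (intro continuous_at_imp_continuous_on) auto

lemma v_tendsto_0: "(v \<longlongrightarrow> m) (at_right 0)"
proof -
  have "(v \<longlongrightarrow> v 0) (at 0 within {0..})"
    using DERIV_continuous[OF v_deriv_within[of 0]] by (simp add: continuous_within)
  then have "(v \<longlongrightarrow> v 0) (at_right 0)"
    by (rule tendsto_within_subset) auto
  then show ?thesis using v_0 by simp
qed

lemma difference_quotient_tendsto: "((\<lambda>s. (v s - m) / s) \<longlongrightarrow> n) (at_right 0)"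
proof -
  have "((\<lambda>s. (v s - v 0) / (s - 0)) \<longlongrightarrow> w 0) (at 0 within {0..})"
    using v_deriv_within[of 0] by (simp add: has_field_derivative_iff)
  then have "((\<lambda>s. (v s - v 0) / (s - 0)) \<longlongrightarrow> w 0) (at_right 0)"
    by (rule tendsto_within_subset) auto
  then show ?thesis using v_0 w_0 by simp
qed

lemma v_mvt:
  assumes "0 \<le> a" "a < b"
  obtains z where "a < z" "z < b" "v b - v a = (b - a) * w z"
proof -
  have "continuous_on {a..b} v"
    using continuous_on_v by (rule continuous_on_subset) (use assms in auto)
  then obtain l z where z: "a < z" "z < b" "(v has_real_derivative l) (at z)" "v b - v a = (b - a) * l"
    using MVT[OF assms(2)] v_deriv assms real_differentiable_def by (metis le_less_trans)
  then have "l = w z" using v_deriv[of z] assms DERIV_unique by force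
  then show ?thesis using z that by blast
qed

lemma v_nondecreasing:
  assumes "0 < a" "a \<le> b" "\<forall>x\<in>{a..b}. w x \<ge> 0"
  shows "v a \<le> v b"
proof (rule DERIV_nonneg_imp_nondecreasing[OF assms(2)])
  fix x assume "a \<le> x" "x \<le> b"
  then show "\<exists>y. (v has_real_derivative y) (at x) \<and> 0 \<le> y"
    using v_deriv[of x] assms by (intro exI[of _ "w x"]) auto
qed

lemma v_nonincreasing:
  assumes "0 < a" "a \<le> b" "\<forall>x\<in>{a..b}. w x \<le> 0"
  shows "v b \<le> v a"
proof (rule DERIV_nonpos_imp_nonincreasing[OF assms(2)])
  fix x assume "a \<le> x" "x \<le> b"
  then show "\<exists>y. (v has_real_derivative y) (at x) \<and> y \<le> 0"
    using v_deriv[of x] assms by (intro exI[of _ "w x"]) auto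
qed

lemma v_strict_mono:
  assumes "\<forall>t>0. w t > 0" "0 < s" "s < t"
  shows "v s < v t"
proof -
  obtain z where "s < z" "v t - v s = (t - s) * w z"
    using v_mvt[of s t] assms(2,3) by auto
  moreover have "(t - s) * w z > 0"
    using assms \<open>s < z\<close> by simp
  ultimately show ?thesis by linarith
qed

lemma momentum_mvt:
  assumes "0 < s" "s < t"
  obtains z where "s < z" "z < t" "(w t + 3 * v t) - (w s + 3 * v s) = (t - s) * Rfun (v z)"
proof -
  have "((\<lambda>s. w s + 3 * v s) has_real_derivative Rfun (v x)) (at x)" if "x > 0" for x
    using w_deriv[OF that] v_deriv[OF that] by (auto intro!: derivative_eq_intros)
  then have "\<exists>z. s < z \<and> z < t \<and> (w t + 3 * v t) - (w s + 3 * v s) = (t - s) * Rfun (v z)"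
    using assms by (intro MVT2) auto
  then show ?thesis using that by blast
qed

lemma momentum_lipschitz:
  obtains M where "\<And>s t. 0 < s \<Longrightarrow> s \<le> t \<Longrightarrow> t \<le> 1 \<Longrightarrow>
    \<bar>(w t + 3 * v t) - (w s + 3 * v s)\<bar> \<le> M * (t - s)"
proof -
  have "compact (v ` {0..1})"
    using continuous_on_v by (intro compact_continuous_image) (auto intro: continuous_on_subset)
  then obtain B where "\<forall>x\<in>v ` {0..1}. norm x \<le> B"
    using compact_imp_bounded bounded_iff by blast
  then have B: "\<And>t. t \<in> {0..1} \<Longrightarrow> \<bar>v t\<bar> \<le> B" by auto
  have R_bound: "\<bar>Rfun (v t)\<bar> \<le> 4 * (B + 1)" if "t \<in> {0..1}" for t
    using Rfun_bound[of "v t"] B[OF that] abs_triangle_ineq[of "v t" 1] by simp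
  show ?thesis
  proof (rule that)
    fix s t :: real assume st: "0 < s" "s \<le> t" "t \<le> 1"
    show "\<bar>(w t + 3 * v t) - (w s + 3 * v s)\<bar> \<le> 4 * (B + 1) * (t - s)"
    proof (cases "s = t")
      case False
      then obtain z where z: "s < z" "z < t"
        and eq: "(w t + 3 * v t) - (w s + 3 * v s) = (t - s) * Rfun (v z)"
        using momentum_mvt[of s t] st by auto
      have "(t - s) * \<bar>Rfun (v z)\<bar> \<le> (t - s) * (4 * (B + 1))"
        using R_bound[of z] st z by (intro mult_left_mono) auto
      then show ?thesis unfolding eq using st by (simp add: abs_mult mult_ac)
    qed simp
  qed
qed

lemma mvt_from_0:
  obtains \<xi> where "\<And>t. t > 0 \<Longrightarrow> 0 < \<xi> t \<and> \<xi> t < t \<and> w (\<xi> t) = (v t - m) / t"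
proof -
  have "\<exists>z. 0 < z \<and> z < t \<and> w z = (v t - m) / t" if t: "t > 0" for t
  proof -
    obtain z where "0 < z" "z < t" "v t - v 0 = (t - 0) * w z"
      using v_mvt[OF order_refl t] by blast
    then show ?thesis using t v_0 by (intro exI[of _ z]) (auto simp: field_simps)
  qed
  then have "\<exists>\<xi>. \<forall>t. t > 0 \<longrightarrow> 0 < \<xi> t \<and> \<xi> t < t \<and> w (\<xi> t) = (v t - m) / t"
    by (intro choice) blast
  then show ?thesis using that by blast
qed

text \<open>\<open>w\<close> is only known to be differentiable for \<open>t > 0\<close>; its right continuity at \<open>0\<close> comes
  from comparing \<open>w t\<close> with the mean-value point \<open>w (\<xi> t) = (v t - m) / t\<close> through the
  Lipschitz function \<open>w + 3 v\<close>.\<close>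
lemma w_tendsto_0: "(w \<longlongrightarrow> n) (at_right 0)"
proof -
  obtain M where M: "\<And>s t. 0 < s \<Longrightarrow> s \<le> t \<Longrightarrow> t \<le> 1 \<Longrightarrow>
      \<bar>(w t + 3 * v t) - (w s + 3 * v s)\<bar> \<le> M * (t - s)"
    using momentum_lipschitz by blast
  obtain \<xi> where \<xi>: "\<And>t. t > 0 \<Longrightarrow> 0 < \<xi> t \<and> \<xi> t < t \<and> w (\<xi> t) = (v t - m) / t"
    using mvt_from_0 by blast
  have ev: "eventually (\<lambda>t. 0 < t \<and> t \<le> 1 \<and> 0 < \<xi> t \<and> \<xi> t < t \<and> w (\<xi> t) = (v t - m) / t) (at_right 0)"
    using \<xi> by (intro eventually_at_rightI[of 0 1]) auto
  have \<xi>_tendsto: "(\<xi> \<longlongrightarrow> 0) (at_right 0)"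
    by (rule tendsto_sandwich[of "\<lambda>_. 0" _ _ "\<lambda>t. t"])
      (use ev in \<open>auto elim: eventually_mono intro: tendsto_ident_at\<close>)
  have "filterlim \<xi> (at_right 0) (at_right 0)"
    using \<xi>_tendsto ev by (intro filterlim_at_withinI) (auto elim: eventually_mono)
  then have v_\<xi>: "((\<lambda>t. v (\<xi> t)) \<longlongrightarrow> m) (at_right 0)"
    by (rule filterlim_compose[OF v_tendsto_0])
  have w_\<xi>: "((\<lambda>t. w (\<xi> t)) \<longlongrightarrow> n) (at_right 0)"
    using difference_quotient_tendsto
    by (rule Lim_transform_eventually) (use ev in \<open>auto elim: eventually_mono\<close>)
  have "((\<lambda>t. (w t + 3 * v t) - (w (\<xi> t) + 3 * v (\<xi> t))) \<longlongrightarrow> 0) (at_right 0)"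
  proof (rule Lim_null_comparison)
    show "eventually (\<lambda>t. norm ((w t + 3 * v t) - (w (\<xi> t) + 3 * v (\<xi> t))) \<le> M * (t - \<xi> t)) (at_right 0)"
      using ev
    proof eventually_elim
      case (elim t)
      have "\<bar>(w t + 3 * v t) - (w (\<xi> t) + 3 * v (\<xi> t))\<bar> \<le> M * (t - \<xi> t)"
        by (rule M) (use elim in auto)
      then show ?case by simp
    qed
    show "((\<lambda>t. M * (t - \<xi> t)) \<longlongrightarrow> 0) (at_right 0)"
      using \<xi>_tendsto by (auto intro!: tendsto_eq_intros)
  qed
  then have "((\<lambda>t. w (\<xi> t) + 3 * v (\<xi> t) - 3 * v t + ((w t + 3 * v t) - (w (\<xi> t) + 3 * v (\<xi> t))))
      \<longlongrightarrow> n + 3 * m - 3 * m + 0) (at_right 0)"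
    by (intro tendsto_intros w_\<xi> v_\<xi> v_tendsto_0)
  then show ?thesis by simp
qed

text \<open>The energy \<open>exp (11 s) ((v s + 1)\<^sup>2 + (w s)\<^sup>2)\<close> is nondecreasing, so it vanishes
  on \<open>(0, t0]\<close>.\<close>
lemma no_rest_at_minus_1:
  assumes "t0 > 0" "v t0 = -1" "w t0 = 0"
  shows False
proof -
  define E where "E s = exp (11 * s) * ((v s + 1)^2 + (w s)^2)" for s
  have "E s \<le> E t0" if s: "0 < s" "s \<le> t0" for s
  proof (rule DERIV_nonneg_imp_nondecreasing[OF s(2)])
    fix x assume x: "s \<le> x" "x \<le> t0"
    have "(E has_real_derivative exp (11 * x) *
        (11 * ((v x + 1)^2 + (w x)^2) + (2 * (v x + 1) * w x + 2 * w x * (Rfun (v x) - 3 * w x)))) (at x)"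
      unfolding E_def using s x
      by (auto intro!: derivative_eq_intros v_deriv w_deriv simp: algebra_simps)
    moreover have "0 \<le> 11 * ((v x + 1)^2 + (w x)^2) + (2 * (v x + 1) * w x + 2 * w x * (Rfun (v x) - 3 * w x))"
      using energy_rate_bounds(1)[OF Rfun_bound[of "v x"], of "w x"] by simp
    ultimately show "\<exists>y. (E has_real_derivative y) (at x) \<and> 0 \<le> y" by auto
  qed
  then have "(v s + 1)^2 + (w s)^2 \<le> 0" if "0 < s" "s \<le> t0" for s
    using that assms by (simp add: E_def mult_le_0_iff)
  then have "v s = -1" if "0 < s" "s \<le> t0" for s
    using that sum_power2_le_zero_iff[of "v s + 1" "w s"] by fastforce
  then have "eventually (\<lambda>s. v s = -1) (at_right 0)"
    using \<open>t0 > 0\<close> by (intro eventually_at_rightI[of 0 t0]) auto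
  then have "(v \<longlongrightarrow> -1) (at_right 0)"
    by (rule tendsto_eventually)
  then show False
    using tendsto_unique[OF trivial_limit_at_right_real v_tendsto_0] m_less by simp
qed

lemma stays_below:
  assumes t1: "t1 > 0" "v t1 < -1" "w t1 < 0" and "t1 \<le> t2"
  shows "v t2 < -1"
proof -
  have "\<forall>x\<in>{t1..t2}. w x < 0"
  proof (rule negative_persists[OF continuous_on_w[OF \<open>t1 > 0\<close>] \<open>w t1 < 0\<close>])
    fix T assume T: "t1 < T" "T \<le> t2" "w T = 0" "\<forall>x\<in>{t1..T}. w x \<le> 0"
    then have "v T < -1"
      using v_nonincreasing[of t1 T] t1 by simp
    then show "\<exists>D<0. (w has_real_derivative D) (at T)"
      using w_deriv[of T] Rfun_neg[of "v T"] T t1 by (intro exI[of _ "Rfun (v T)"]) auto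
  qed
  then have "v t2 \<le> v t1"
    using v_nonincreasing[of t1 t2] t1 \<open>t1 \<le> t2\<close> by (meson less_imp_le)
  then show ?thesis using t1 by simp
qed

lemma stays_above:
  assumes t1: "t1 > 0" "v t1 > -1" "w t1 > 0" and "t1 \<le> t2"
  shows "v t2 > -1"
proof -
  have "\<forall>x\<in>{t1..t2}. - w x < 0"
  proof (rule negative_persists)
    show "continuous_on {t1..t2} (\<lambda>x. - w x)"
      using continuous_on_w[OF \<open>t1 > 0\<close>] by (rule continuous_on_minus)
    fix T assume T: "t1 < T" "T \<le> t2" "- w T = 0" "\<forall>x\<in>{t1..T}. - w x \<le> 0"
    then have "v T > -1"
      using v_nondecreasing[of t1 T] t1 by simp
    then show "\<exists>D<0. ((\<lambda>x. - w x) has_real_derivative D) (at T)"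
      using DERIV_minus[OF w_deriv[of T]] Rfun_pos[of "v T"] T t1
      by (intro exI[of _ "- Rfun (v T)"]) auto
  qed (use t1 in simp)
  then have "v t1 \<le> v t2"
    using v_nondecreasing[of t1 t2] t1 \<open>t1 \<le> t2\<close> by force
  then show ?thesis using t1 by simp
qed

lemma overshoots_after_exceeding:
  assumes "t2 > 0" "v t2 > -1"
  shows "\<exists>t>0. v t > -1 \<and> w t > 0"
proof -
  define S where "S = {0..t2} \<inter> v -` {..-1}"
  have "closed S"
    unfolding S_def
    by (rule continuous_closed_preimage) (auto intro: continuous_on_subset[OF continuous_on_v])
  then have "compact S"
    unfolding S_def compact_eq_bounded_closed by (auto intro: bounded_subset[of "{0..t2}"])
  moreover have "0 \<in> S" unfolding S_def using v_0 m_less \<open>t2 > 0\<close> by auto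
  ultimately obtain T where T: "T \<in> S" "\<forall>x\<in>S. x \<le> T"
    using compact_attains_sup by blast
  then have "0 \<le> T" "T < t2" "v T \<le> -1"
    using assms unfolding S_def by (auto simp: less_le)
  then obtain z where z: "T < z" "z < t2" "v t2 - v T = (t2 - T) * w z"
    using v_mvt by blast
  have "(t2 - T) * w z > 0" using z \<open>v T \<le> -1\<close> assms by simp
  then have "w z > 0" using z by (simp add: zero_less_mult_iff)
  moreover have "v z > -1"
  proof (rule ccontr)
    assume "\<not> v z > -1"
    then have "z \<in> S" unfolding S_def using z \<open>0 \<le> T\<close> by auto
    then show False using T z by force
  qed
  ultimately show ?thesis using z \<open>0 \<le> T\<close> by (intro exI[of _ z]) auto
qed

lemma turns_back_from_rest:
  assumes "t0 > 0" "v t0 < -1" "w t0 = 0"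
  shows "\<exists>t>0. v t < -1 \<and> w t < 0"
proof -
  obtain d where "d > 0" and d: "\<forall>h>0. h < d \<longrightarrow> w (t0 + h) < 0"
    using DERIV_neg_dec_right[OF w_deriv[OF \<open>t0 > 0\<close>]] Rfun_neg[OF \<open>v t0 < -1\<close>] \<open>w t0 = 0\<close>
    by force
  define t where "t = t0 + d / 2"
  have "\<forall>x\<in>{t0..t}. w x \<le> 0"
  proof
    fix x assume x: "x \<in> {t0..t}"
    show "w x \<le> 0"
    proof (cases "x = t0")
      case False
      then have "w (t0 + (x - t0)) < 0"
        using d[rule_format, of "x - t0"] x \<open>d > 0\<close> unfolding t_def by auto
      then show ?thesis by simp
    qed (use \<open>w t0 = 0\<close> in simp)
  qed
  then have "v t \<le> v t0"
    using v_nonincreasing[of t0 t] \<open>t0 > 0\<close> \<open>d > 0\<close> unfolding t_def by simp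
  moreover have "w t < 0" using d \<open>d > 0\<close> unfolding t_def by simp
  ultimately show ?thesis using assms \<open>d > 0\<close> by (intro exI[of _ t]) (auto simp: t_def)
qed

lemma overshoots_or_turns_back:
  assumes "\<exists>t>0. w t \<le> 0 \<or> v t > -1"
  shows "(\<exists>t>0. v t > -1 \<and> w t > 0) \<or> (\<exists>t>0. v t < -1 \<and> w t < 0)"
proof (cases "\<exists>t>0. v t > -1")
  case True
  then show ?thesis using overshoots_after_exceeding by blast
next
  case False
  then have below: "v t \<le> -1" if "t > 0" for t using that by force
  obtain t0 where "t0 > 0" "w t0 \<le> 0" using assms False by force
  then consider "v t0 < -1" "w t0 < 0" | "v t0 < -1" "w t0 = 0" | "v t0 = -1" "w t0 < 0"
    | "v t0 = -1" "w t0 = 0"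
    using below[of t0] by linarith
  then show ?thesis
  proof cases
    case 1
    then show ?thesis using \<open>t0 > 0\<close> by blast
  next
    case 2
    then show ?thesis using turns_back_from_rest \<open>t0 > 0\<close> by blast
  next
    case 3
    then obtain d where "d > 0" and d: "\<forall>h>0. h < d \<longrightarrow> v t0 < v (t0 - h)"
      using DERIV_neg_dec_left[OF v_deriv[OF \<open>t0 > 0\<close>]] by blast
    obtain h where "0 < h" "h < d" "h < t0"
      using field_lbound_gt_zero[OF \<open>d > 0\<close> \<open>t0 > 0\<close>] by blast
    then show ?thesis using d below[of "t0 - h"] 3 by force
  next
    case 4
    then show ?thesis using no_rest_at_minus_1 \<open>t0 > 0\<close> by blast
  qed
qed

text \<open>Since \<open>(w + 3 v)' = Rfun v \<ge> -2\<close>, a trajectory that never exceeds \<open>-1\<close> has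
  \<open>w \<ge> n + 3 m + 1\<close> on \<open>(0, 1)\<close>.\<close>
lemma exceeds_if_fast:
  assumes "n > -4 * m - 2"
  shows "\<exists>t>0. v t > -1"
proof (rule ccontr)
  assume "\<not> ?thesis"
  then have below: "v t \<le> -1" if "t > 0" for t using that by force
  have momentum_lower: "n + 3 * m \<le> w x + 3 * v x + 2 * x" if "x > 0" for x
  proof (rule tendsto_upperbound)
    show "((\<lambda>s. w s + 3 * v s) \<longlongrightarrow> n + 3 * m) (at_right 0)"
      by (intro tendsto_intros w_tendsto_0 v_tendsto_0)
    show "eventually (\<lambda>s. w s + 3 * v s \<le> w x + 3 * v x + 2 * x) (at_right 0)"
    proof (rule eventually_at_rightI[of 0 x])
      fix s assume s: "s \<in> {0<..<x}"
      then obtain z where "s < z" "z < x"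
        and eq: "(w x + 3 * v x) - (w s + 3 * v s) = (x - s) * Rfun (v z)"
        using momentum_mvt[of s x] by auto
      have "(x - s) * (-2) \<le> (x - s) * Rfun (v z)"
        using Rfun_ge_minus_2[of "v z"] s by (intro mult_left_mono) auto
      then show "w s + 3 * v s \<le> w x + 3 * v x + 2 * x" using eq s by simp
    qed (use that in auto)
  qed simp
  obtain z where "0 < z" "z < 1" "v 1 - v 0 = (1 - 0) * w z"
    using v_mvt[of 0 1] by auto
  then have "v 1 \<ge> n + 4 * m + 1"
    using momentum_lower[of z] below[of z] v_0 by simp
  then show False using below[of 1] assms by simp
qed

lemma negative_velocity_turns_back:
  assumes "n < 0"
  shows "\<exists>t>0. v t < -1 \<and> w t < 0"
proof -
  have "eventually (\<lambda>s. (v s - m) / s < 0 \<and> v s < -1) (at_right 0)"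
    using order_tendstoD(2)[OF difference_quotient_tendsto assms]
      order_tendstoD(2)[OF v_tendsto_0 m_less]
    by (rule eventually_conj)
  then obtain b where "b > 0" and b: "\<And>s. 0 < s \<Longrightarrow> s < b \<Longrightarrow> (v s - m) / s < 0 \<and> v s < -1"
    unfolding eventually_at_right_field by auto
  obtain z where z: "0 < z" "z < b / 2" "v (b / 2) - v 0 = (b / 2 - 0) * w z"
    using v_mvt[of 0 "b / 2"] \<open>b > 0\<close> by auto
  then have "w z = (v (b / 2) - m) / (b / 2)" using v_0 by (simp add: field_simps)
  then have "w z < 0" using b[of "b / 2"] \<open>b > 0\<close> by simp
  moreover have "v z < -1" using b[of z] z by simp
  ultimately show ?thesis using z by blast
qed

end

section \<open>Continuous dependence on the initial slope\<close>

lemma trajectory_distance_bound: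
  assumes "trajectory v1 w1 m n1" "trajectory v2 w2 m n2" "t > 0"
  shows "(v1 t - v2 t)^2 + (w1 t - w2 t)^2 \<le> exp (5 * t) * (n1 - n2)^2"
proof -
  interpret A: trajectory v1 w1 m n1 by fact
  interpret B: trajectory v2 w2 m n2 by fact
  define D where "D s = exp (-5 * s) * ((v1 s - v2 s)^2 + (w1 s - w2 s)^2)" for s
  have D_antitone: "D t \<le> D s" if s: "0 < s" "s \<le> t" for s
  proof (rule DERIV_nonpos_imp_nonincreasing[OF s(2)])
    fix x assume "s \<le> x" "x \<le> t"
    then have x: "x > 0" using s by simp
    define a where "a = v1 x - v2 x"
    define b where "b = w1 x - w2 x"
    have "(D has_real_derivative
        exp (-5 * x) * (2 * a * b + 2 * b * ((Rfun (v1 x) - Rfun (v2 x)) - 3 * b) - 5 * (a^2 + b^2))) (at x)"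
      unfolding D_def a_def b_def
      by (rule derivative_eq_intros A.v_deriv[OF x] B.v_deriv[OF x] A.w_deriv[OF x] B.w_deriv[OF x]
          refl)+ (simp add: algebra_simps)
    moreover have "2 * a * b + 2 * b * ((Rfun (v1 x) - Rfun (v2 x)) - 3 * b) \<le> 5 * (a^2 + b^2)"
      unfolding a_def by (rule energy_rate_bounds(2)[OF Rfun_lipschitz])
    ultimately show "\<exists>y. (D has_real_derivative y) (at x) \<and> y \<le> 0"
      by (intro exI conjI) (auto simp: mult_nonneg_nonpos)
  qed
  have "(D \<longlongrightarrow> exp (-5 * 0) * ((m - m)^2 + (n1 - n2)^2)) (at_right 0)"
    unfolding D_def by (intro tendsto_intros A.v_tendsto_0 B.v_tendsto_0 A.w_tendsto_0 B.w_tendsto_0)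
  then have "D t \<le> exp (-5 * 0) * ((m - m)^2 + (n1 - n2)^2)"
    by (rule tendsto_lowerbound) (use D_antitone \<open>t > 0\<close> in \<open>auto intro: eventually_at_rightI[of 0 t]\<close>)
  then have "D t \<le> (n1 - n2)^2" by simp
  then show ?thesis
    unfolding D_def by (simp add: exp_minus field_simps)
qed

corollary trajectory_lipschitz:
  assumes "trajectory v1 w1 m n1" "trajectory v2 w2 m n2" "t > 0"
  shows "\<bar>v1 t - v2 t\<bar> \<le> exp (5 * t / 2) * \<bar>n1 - n2\<bar>"
    and "\<bar>w1 t - w2 t\<bar> \<le> exp (5 * t / 2) * \<bar>n1 - n2\<bar>"
proof -
  have "exp (5 * t) * (n1 - n2)^2 = (exp (5 * t / 2) * \<bar>n1 - n2\<bar>)^2"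
    by (simp add: power_mult_distrib flip: exp_double)
  then have v: "(v1 t - v2 t)^2 \<le> (exp (5 * t / 2) * \<bar>n1 - n2\<bar>)^2"
    and w: "(w1 t - w2 t)^2 \<le> (exp (5 * t / 2) * \<bar>n1 - n2\<bar>)^2"
    using trajectory_distance_bound[OF assms] zero_le_power2[of "v1 t - v2 t"]
      zero_le_power2[of "w1 t - w2 t"] by linarith+
  show "\<bar>v1 t - v2 t\<bar> \<le> exp (5 * t / 2) * \<bar>n1 - n2\<bar>"
    by (rule power2_le_imp_le) (use v in simp_all)
  show "\<bar>w1 t - w2 t\<bar> \<le> exp (5 * t / 2) * \<bar>n1 - n2\<bar>"
    by (rule power2_le_imp_le) (use w in simp_all)
qed

section \<open>The shooting sets\<close>

locale shooting =
  fixes V Vt :: "real \<Rightarrow> real \<Rightarrow> real" and m :: real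
  assumes trajectory: "\<And>n. trajectory (\<lambda>t. V t n) (\<lambda>t. Vt t n) m n"
begin

definition beta0 :: "real set"
  where "beta0 = {n. \<forall>t>0. Vt t n > 0 \<and> V t n \<le> -1}"

definition overshooting :: "real set"
  where "overshooting = {n. \<exists>t>0. V t n > -1 \<and> Vt t n > 0}"

definition turning_back :: "real set"
  where "turning_back = {n. \<exists>t>0. V t n < -1 \<and> Vt t n < 0}"

lemma continuous_on_V:
  assumes "t > 0"
  shows "continuous_on UNIV (\<lambda>n. V t n)"
proof (rule lipschitz_on_continuous_on)
  show "lipschitz_on (exp (5 * t / 2)) UNIV (\<lambda>n. V t n)"
    using trajectory_lipschitz(1)[OF trajectory trajectory assms]
    by (intro lipschitz_onI) (simp_all add: dist_real_def)
qed

lemma continuous_on_Vt: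
  assumes "t > 0"
  shows "continuous_on UNIV (\<lambda>n. Vt t n)"
proof (rule lipschitz_on_continuous_on)
  show "lipschitz_on (exp (5 * t / 2)) UNIV (\<lambda>n. Vt t n)"
    using trajectory_lipschitz(2)[OF trajectory trajectory assms]
    by (intro lipschitz_onI) (simp_all add: dist_real_def)
qed

lemma open_overshooting: "open overshooting"
proof -
  have "overshooting = (\<Union>t\<in>{0<..}. {n. -1 < V t n \<and> 0 < Vt t n})"
    unfolding overshooting_def by auto
  also have "open \<dots>"
    by (intro open_UN ballI open_Collect_conj open_Collect_less continuous_on_const
        continuous_on_V continuous_on_Vt) auto
  finally show ?thesis .
qed

lemma open_turning_back: "open turning_back"
proof -
  have "turning_back = (\<Union>t\<in>{0<..}. {n. V t n < -1 \<and> Vt t n < 0})"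
    unfolding turning_back_def by auto
  also have "open \<dots>"
    by (intro open_UN ballI open_Collect_conj open_Collect_less continuous_on_const
        continuous_on_V continuous_on_Vt) auto
  finally show ?thesis .
qed

lemma overshooting_turning_back_disjoint: "overshooting \<inter> turning_back = {}"
proof -
  have False if n: "n \<in> overshooting" "n \<in> turning_back" for n
  proof -
    obtain t1 t2 where t1: "t1 > 0" "V t1 n > -1" "Vt t1 n > 0"
      and t2: "t2 > 0" "V t2 n < -1" "Vt t2 n < 0"
      using n unfolding overshooting_def turning_back_def by blast
    have "V (max t1 t2) n > -1"
      using trajectory.stays_above[OF trajectory t1 max.cobounded1] .
    moreover have "V (max t1 t2) n < -1"
      using trajectory.stays_below[OF trajectory t2 max.cobounded2] .
    ultimately show False by simp
  qed
  then show ?thesis by blast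
qed

lemma Compl_beta0: "- beta0 = overshooting \<union> turning_back"
proof
  show "- beta0 \<subseteq> overshooting \<union> turning_back"
  proof
    fix n assume "n \<in> - beta0"
    then have "\<exists>t>0. Vt t n \<le> 0 \<or> V t n > -1" unfolding beta0_def by force
    then show "n \<in> overshooting \<union> turning_back"
      using trajectory.overshoots_or_turns_back[OF trajectory]
      unfolding overshooting_def turning_back_def by blast
  qed
  show "overshooting \<union> turning_back \<subseteq> - beta0"
    unfolding beta0_def overshooting_def turning_back_def by force
qed

lemma overshooting_nonempty: "overshooting \<noteq> {}"
proof -
  have "m < -1" using trajectory.m_less[OF trajectory] .
  then obtain t where "t > 0" "V t (-4 * m) > -1"
    using trajectory.exceeds_if_fast[OF trajectory, of "-4 * m"] by auto
  then have "-4 * m \<in> overshooting"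
    using trajectory.overshoots_after_exceeding[OF trajectory] unfolding overshooting_def by blast
  then show ?thesis by blast
qed

lemma turning_back_nonempty: "turning_back \<noteq> {}"
  using trajectory.negative_velocity_turns_back[OF trajectory, of "-1"]
  unfolding turning_back_def by auto

lemma beta0_nonempty: "beta0 \<noteq> {}"
proof
  assume "beta0 = {}"
  then have "UNIV \<subseteq> overshooting \<union> turning_back" using Compl_beta0 by simp
  then show False
    using connectedD[OF connected_UNIV open_overshooting open_turning_back]
      overshooting_turning_back_disjoint overshooting_nonempty turning_back_nonempty
    by auto
qed

lemma closed_beta0: "closed beta0"
  using Compl_beta0 open_overshooting open_turning_back by (simp add: closed_def open_Un)

lemma beta0_below:
  assumes "n \<in> beta0" "t > 0"
  shows "V t n < -1"
proof -
  have "V t n < V (t + 1) n"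
    using trajectory.v_strict_mono[OF trajectory, of n t "t + 1"] assms unfolding beta0_def by simp
  moreover have "V (t + 1) n \<le> -1"
    using assms unfolding beta0_def by simp
  ultimately show ?thesis by simp
qed

end

theorem lemma4p3:
  fixes m :: real
    and V Vt :: "real \<Rightarrow> real \<Rightarrow> real"
  assumes m: "m < -1"
    and dV: "\<And>n t. t \<ge> 0 \<Longrightarrow>
               ((\<lambda>s. V s n) has_real_derivative Vt t n) (at t within {0..})"
    and dVt: "\<And>n t. t > 0 \<Longrightarrow>
               ((\<lambda>s. Vt s n) has_real_derivative (Rfun (V t n) - 3 * Vt t n)) (at t)"
    and V0: "\<And>n. V 0 n = m"
    and Vt0: "\<And>n. Vt 0 n = n"
  shows "{n. \<forall>t>0. Vt t n > 0 \<and> V t n \<le> -1} \<noteq> {}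
       \<and> closed {n. \<forall>t>0. Vt t n > 0 \<and> V t n \<le> -1}
       \<and> (\<forall>n \<in> {n. \<forall>t>0. Vt t n > 0 \<and> V t n \<le> -1}. \<forall>t>0. V t n < -1)"
proof -
  have "trajectory (\<lambda>s. V s n) (\<lambda>s. Vt s n) m n" for n
    by unfold_locales (use m dV dVt V0 Vt0 in auto)
  then interpret shooting V Vt m
    by (rule shooting.intro)
  show ?thesis
    using beta0_nonempty closed_beta0 beta0_below unfolding beta0_def by blast
qed

end
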